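(* Let $\Sigma=(X,U,F)$ be a system, $Q\subset X$ a controlled invariant set, and $V\subset U$ a finite cover of $Q$. Then $h_{inv}(Q)\le\log\rho(M_{Q,V})$, where $\rho$ denotes the spectral radius.
   Context: A system is a triple $\Sigma=(X,U,F)$ where $X,U$ are nonempty sets and $F:X\times U\rightrightarrows X$ is a set-valued map with $F(x,u)\neq\emptyset$ for all $(x,u)$; for $A\subset X$, $F(A,u)=\bigcup_{x\in A}F(x,u)$. $Q\subset X$ is controlled invariant if for every $x\in Q$ there is $u\in U$ with $F(x,u)\subset Q$. For $u\in U$ put $Q_u=\{x\in Q:F(x,u)\subset Q\}$. Elements of $U^n$ are written $\omega=\omega_0\cdots\omega_{n-1}$, $\omega_{[0,i]}=\omega_0\cdots\omega_i$. A set $S\subset U^n$ is an admissible family of length $n$ for $Q$ if (a) $\omega'_0=\omega''_0$ for all $\omega',\omega''\in S$, and (b) there exists $x\in Q$ such that for every $\omega\in S$, with $I^0_\omega(x)=\{x\}$: for all $i=0,\dots,n-2$, $F(I^i_\omega(x),\omega_i)\subset\bigcup_{\omega'\in S,\ \omega'_{[0,i]}=\omega_{[0,i]}}Q_{\omega'_{i+1}}$ and $I^{i+1}_\omega(x):=F(I^i_\omega(x),\omega_i)\cap Q_{\omega_{i+1}}\neq\emptyset$; and $I^n_\omega(x):=F(I^{n-1}_\omega(x),\omega_{n-1})\subset Q$. Let $AF^n(Q)$ be the set of such families and $Q_S$ the set of $x\in Q$ satisfying (b). A set $\mathscr{S}\subset U^n$ is $(n,Q)$-spanning if $Q\subset\bigcup_{S\subset\mathscr{S},\,S\in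 AF^n(Q)}Q_S$; $r_{inv}(n,Q)$ is the infimum of $\sharp\mathscr{S}$ over such sets, and $h_{inv}(Q)=\limsup_{n\to\infty}\frac1n\log r_{inv}(n,Q)$ ($\log$ base $2$). A set $V\subset U$ is a cover of $Q$ if $Q\subset\bigcup_{a\in V}Q_a$. The admissible matrix $M_{Q,V}=(M_{ab})_{a,b\in V}$ has $M_{ab}=1$ if there exists $x\in Q_a$ with $F(x,a)\cap Q_b\neq\emptyset$, and $M_{ab}=0$ otherwise. *)

theory Defs
  imports "Jordan_Normal_Form.Spectral_Radius" "HOL-Library.Extended_Real"
    "HOL-Library.Extended_Nat" "HOL-Library.Liminf_Limsup"
begin

text \<open>A system (X,U,F): states of type 'x (X = UNIV), controls of type 'u (U = UNIV),
  F :: 'x => 'u => 'x set, required to be nonempty-valued (see is_system).\<close>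

definition is_system :: "('x \<Rightarrow> 'u \<Rightarrow> 'x set) \<Rightarrow> bool" where
  "is_system F \<longleftrightarrow> (\<forall>x u. F x u \<noteq> {})"

definition Fimg :: "('x \<Rightarrow> 'u \<Rightarrow> 'x set) \<Rightarrow> 'x set \<Rightarrow> 'u \<Rightarrow> 'x set" where
  "Fimg F A u = (\<Union>x\<in>A. F x u)"

definition controlled_invariant :: "('x \<Rightarrow> 'u \<Rightarrow> 'x set) \<Rightarrow> 'x set \<Rightarrow> bool" where
  "controlled_invariant F Q \<longleftrightarrow> (\<forall>x\<in>Q. \<exists>u. F x u \<subseteq> Q)"

definition Qu :: "('x \<Rightarrow> 'u \<Rightarrow> 'x set) \<Rightarrow> 'x set \<Rightarrow> 'u \<Rightarrow> 'x set" where
  "Qu F Q u = {x\<in>Q. F x u \<subseteq> Q}"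

text \<open>The sets I^i_w(x) for i = 0,...,n-1 (words w are lists of length n,
  w ! i = w_i).\<close>
fun Iset :: "('x \<Rightarrow> 'u \<Rightarrow> 'x set) \<Rightarrow> 'x set \<Rightarrow> 'u list \<Rightarrow> 'x \<Rightarrow> nat \<Rightarrow> 'x set" where
  "Iset F Q w x 0 = {x}"
| "Iset F Q w x (Suc i) = Fimg F (Iset F Q w x i) (w ! i) \<inter> Qu F Q (w ! Suc i)"

definition adm_point :: "('x \<Rightarrow> 'u \<Rightarrow> 'x set) \<Rightarrow> 'x set \<Rightarrow> nat \<Rightarrow> 'u list set \<Rightarrow> 'x \<Rightarrow> bool" where
  "adm_point F Q n S x \<longleftrightarrow> x \<in> Q \<and>
     (\<forall>w\<in>S.
        (\<forall>i < n - 1.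
           Fimg F (Iset F Q w x i) (w ! i)
             \<subseteq> (\<Union>w'\<in>{w'\<in>S. take (Suc i) w' = take (Suc i) w}. Qu F Q (w' ! Suc i))
           \<and> Iset F Q w x (Suc i) \<noteq> {})
        \<and> Fimg F (Iset F Q w x (n - 1)) (w ! (n - 1)) \<subseteq> Q)"

definition admissible_family :: "('x \<Rightarrow> 'u \<Rightarrow> 'x set) \<Rightarrow> 'x set \<Rightarrow> nat \<Rightarrow> 'u list set \<Rightarrow> bool" where
  "admissible_family F Q n S \<longleftrightarrow> 0 < n \<and> S \<noteq> {} \<and> (\<forall>w\<in>S. length w = n) \<and>
     (\<forall>w'\<in>S. \<forall>w''\<in>S. w' ! 0 = w'' ! 0) \<and> (\<exists>x. adm_point F Q n S x)"

definition QS :: "('x \<Rightarrow> 'u \<Rightarrow> 'x set) \<Rightarrow> 'x set \<Rightarrow> nat \<Rightarrow> 'u list set \<Rightarrow> 'x set" where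
  "QS F Q n S = {x. adm_point F Q n S x}"

definition spanning :: "('x \<Rightarrow> 'u \<Rightarrow> 'x set) \<Rightarrow> 'x set \<Rightarrow> nat \<Rightarrow> 'u list set \<Rightarrow> bool" where
  "spanning F Q n SS \<longleftrightarrow> (\<forall>w\<in>SS. length w = n) \<and>
     Q \<subseteq> (\<Union>S\<in>{S. S \<subseteq> SS \<and> admissible_family F Q n S}. QS F Q n S)"

definition r_inv :: "('x \<Rightarrow> 'u \<Rightarrow> 'x set) \<Rightarrow> nat \<Rightarrow> 'x set \<Rightarrow> enat" where
  "r_inv F n Q = Inf {(if finite SS then enat (card SS) else \<infinity>) | SS. spanning F Q n SS}"

definition elog2 :: "enat \<Rightarrow> ereal" where
  "elog2 k = (case k of \<infinity> \<Rightarrow> \<infinity> | enat m \<Rightarrow> (if m = 0 then -\<infinity> else ereal (log 2 (real m))))"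

definition rlog2 :: "real \<Rightarrow> ereal" where
  "rlog2 r = (if r = 0 then -\<infinity> else ereal (log 2 r))"

definition h_inv :: "('x \<Rightarrow> 'u \<Rightarrow> 'x set) \<Rightarrow> 'x set \<Rightarrow> ereal" where
  "h_inv F Q = limsup (\<lambda>n. ereal (1 / real n) * elog2 (r_inv F n Q))"

definition is_cover :: "('x \<Rightarrow> 'u \<Rightarrow> 'x set) \<Rightarrow> 'x set \<Rightarrow> 'u set \<Rightarrow> bool" where
  "is_cover F Q V \<longleftrightarrow> Q \<subseteq> (\<Union>a\<in>V. Qu F Q a)"

definition adm_entry :: "('x \<Rightarrow> 'u \<Rightarrow> 'x set) \<Rightarrow> 'x set \<Rightarrow> 'u \<Rightarrow> 'u \<Rightarrow> complex" where
  "adm_entry F Q a b = (if \<exists>x\<in>Qu F Q a. F x a \<inter> Qu F Q b \<noteq> {} then 1 else 0)"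

text \<open>M_{Q,V} as a (card V x card V) matrix, via an arbitrary enumeration of V
  (the spectral radius does not depend on the enumeration).\<close>
definition adm_matrix :: "('x \<Rightarrow> 'u \<Rightarrow> 'x set) \<Rightarrow> 'x set \<Rightarrow> 'u set \<Rightarrow> complex mat" where
  "adm_matrix F Q V =
     (let e = (SOME e. bij_betw e {..<card V} V)
      in mat (card V) (card V) (\<lambda>(i, j). adm_entry F Q (e i) (e j)))"

end

theory Submission
  imports Defs "HOL-Real_Asymp.Real_Asymp"
begin

text \<open>Call a word w over V viable from x if the sets I^i_w(x) stay nonempty along it. Every
  viable word is a walk in the directed graph on V whose adjacency matrix is M = M_{Q,V}, and for
  x \<in> Q_a the viable words starting with a form an admissible family S with x \<in> Q_S: a
  successor of a point of I^i_w(x) lies in some Q_b, and since F is nonempty-valued every such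
  prefix can be prolonged to a viable word of full length. Hence the walks of length n are
  (n,Q)-spanning, and r_inv(n,Q) is at most the sum of the entries of M^(n-1). By the Jordan
  normal form these entries are bounded by r^n times a polynomial in n for every r \<ge> \<rho>(M),
  r > 0, so h_inv(Q) \<le> log r.\<close>

section \<open>Walks in a directed graph\<close>

definition walks :: "('a \<Rightarrow> 'a \<Rightarrow> bool) \<Rightarrow> 'a set \<Rightarrow> nat \<Rightarrow> 'a list set" where
  "walks R V n = {w. length w = n \<and> set w \<subseteq> V \<and> (\<forall>i. Suc i < n \<longrightarrow> R (w ! i) (w ! Suc i))}"

definition walks_between :: "('a \<Rightarrow> 'a \<Rightarrow> bool) \<Rightarrow> 'a set \<Rightarrow> nat \<Rightarrow> 'a \<Rightarrow> 'a \<Rightarrow> 'a list set" where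
  "walks_between R V m a b = {w \<in> walks R V (Suc m). w ! 0 = a \<and> w ! m = b}"

definition adjacency_mat :: "nat \<Rightarrow> (nat \<Rightarrow> 'a) \<Rightarrow> ('a \<Rightarrow> 'a \<Rightarrow> bool) \<Rightarrow> nat mat" where
  "adjacency_mat k e R = mat k k (\<lambda>(i, j). if R (e i) (e j) then 1 else 0)"

lemma finite_walks: "finite V \<Longrightarrow> finite (walks R V n)"
  by (rule finite_subset[OF _ finite_lists_length_eq[of V n]]) (auto simp: walks_def)

lemma finite_walks_between: "finite V \<Longrightarrow> finite (walks_between R V m a b)"
  by (simp add: walks_between_def finite_walks)

lemma walks_between_0: "walks_between R V 0 a b \<subseteq> (if a = b then {[a]} else {})"
  by (auto simp: walks_between_def walks_def length_Suc_conv)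

lemma walks_between_Suc_subset:
  "walks_between R V (Suc m) a b \<subseteq> (\<Union>c\<in>{c \<in> V. R c b}. (\<lambda>w. w @ [b]) ` walks_between R V m a c)"
proof
  fix w assume w: "w \<in> walks_between R V (Suc m) a b"
  then have len: "length w = Suc (Suc m)" and V: "set w \<subseteq> V" and last: "w ! Suc m = b"
    and edges: "\<And>i. Suc i < Suc (Suc m) \<Longrightarrow> R (w ! i) (w ! Suc i)"
    by (auto simp: walks_between_def walks_def)
  have w_eq: "w = butlast w @ [b]"
    using len last by (metis append_butlast_last_id last_conv_nth list.size(3) nat.distinct(1) diff_Suc_1)
  have "butlast w \<in> walks_between R V m a (w ! m)"
    using w len by (auto simp: walks_between_def walks_def nth_butlast dest: in_set_butlastD)
  moreover have "w ! m \<in> {c \<in> V. R c b}"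
    using V len edges[of m] last by (auto dest: nth_mem)
  ultimately show "w \<in> (\<Union>c\<in>{c \<in> V. R c b}. (\<lambda>w. w @ [b]) ` walks_between R V m a c)"
    using w_eq by blast
qed

lemma index_pow_mat_Suc:
  assumes "A \<in> carrier_mat k k" "i < k" "j < k"
  shows "(A ^\<^sub>m Suc m) $$ (i, j) = (\<Sum>l<k. (A ^\<^sub>m m) $$ (i, l) * A $$ (l, j))"
  using assms by (auto simp: scalar_prod_def lessThan_atLeast0 intro!: sum.cong)

lemma card_walks_between_le_adjacency_pow:
  assumes e: "bij_betw e {..<k} V" and i: "i < k"
  shows "j < k \<Longrightarrow> card (walks_between R V m (e i) (e j)) \<le> (adjacency_mat k e R ^\<^sub>m m) $$ (i, j)"
proof (induction m arbitrary: j)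
  case 0
  show ?case
  proof (cases "i = j")
    case True
    have "card (walks_between R V 0 (e i) (e j)) \<le> card {[e i]}"
      using walks_between_0[of R V "e i" "e j"] True by (intro card_mono) auto
    then show ?thesis
      using True i by (simp add: adjacency_mat_def)
  next
    case False
    then have "e i \<noteq> e j"
      using e i 0 by (auto simp: bij_betw_def inj_on_def)
    then show ?thesis
      using walks_between_0[of R V "e i" "e j"] by simp
  qed
next
  case (Suc m)
  let ?B = "adjacency_mat k e R"
  let ?L = "{l \<in> {..<k}. R (e l) (e j)}"
  have V: "finite V"
    using e bij_betw_finite by blast
  have preds: "{c \<in> V. R c (e j)} = e ` ?L" and inj: "inj_on e ?L"
    using e by (auto simp: bij_betw_def inj_on_def)
  have "card (walks_between R V (Suc m) (e i) (e j))
      \<le> card (\<Union>c\<in>{c \<in> V. R c (e j)}. (\<lambda>w. w @ [e j]) ` walks_between R V m (e i) c)"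
    using V by (intro card_mono[OF _ walks_between_Suc_subset]) (auto simp: finite_walks_between)
  also have "\<dots> \<le> (\<Sum>c\<in>{c \<in> V. R c (e j)}. card ((\<lambda>w. w @ [e j]) ` walks_between R V m (e i) c))"
    by (rule card_UN_le) (use V in simp)
  also have "\<dots> \<le> (\<Sum>c\<in>{c \<in> V. R c (e j)}. card (walks_between R V m (e i) c))"
    using V by (intro sum_mono card_image_le finite_walks_between)
  also have "\<dots> = (\<Sum>l\<in>?L. card (walks_between R V m (e i) (e l)))"
    unfolding preds using sum.reindex[OF inj] by simp
  also have "\<dots> \<le> (\<Sum>l\<in>?L. (?B ^\<^sub>m m) $$ (i, l))"
    by (intro sum_mono Suc.IH) simp
  also have "\<dots> = (\<Sum>l<k. (?B ^\<^sub>m m) $$ (i, l) * ?B $$ (l, j))"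
    unfolding sum.inter_filter[OF finite_lessThan] using Suc.prems
    by (intro sum.cong) (auto simp: adjacency_mat_def)
  also have "\<dots> = (?B ^\<^sub>m Suc m) $$ (i, j)"
    using i Suc.prems by (intro index_pow_mat_Suc[symmetric]) (simp_all add: adjacency_mat_def)
  finally show ?case .
qed

lemma card_walks_le_sum_adjacency_pow:
  assumes e: "bij_betw e {..<k} V"
  shows "card (walks R V (Suc m)) \<le> (\<Sum>i<k. \<Sum>j<k. (adjacency_mat k e R ^\<^sub>m m) $$ (i, j))"
proof -
  have V: "finite V"
    using e bij_betw_finite by blast
  have "walks R V (Suc m) \<subseteq> (\<Union>i<k. \<Union>j<k. walks_between R V m (e i) (e j))"
  proof
    fix w assume w: "w \<in> walks R V (Suc m)"
    then have "w ! 0 \<in> e ` {..<k}" "w ! m \<in> e ` {..<k}"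
      using e by (auto simp: walks_def bij_betw_def)
    then show "w \<in> (\<Union>i<k. \<Union>j<k. walks_between R V m (e i) (e j))"
      using w by (auto simp: walks_between_def)
  qed
  then have "card (walks R V (Suc m)) \<le> card (\<Union>i<k. \<Union>j<k. walks_between R V m (e i) (e j))"
    using V by (intro card_mono) (auto simp: finite_walks_between)
  also have "\<dots> \<le> (\<Sum>i<k. \<Sum>j<k. card (walks_between R V m (e i) (e j)))"
    by (intro order_trans[OF card_UN_le] sum_mono card_UN_le) simp_all
  also have "\<dots> \<le> (\<Sum>i<k. \<Sum>j<k. (adjacency_mat k e R ^\<^sub>m m) $$ (i, j))"
    by (intro sum_mono card_walks_between_le_adjacency_pow[OF e]) simp_all
  finally show ?thesis .
qed

section \<open>Growth of matrix powers\<close>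

lemma smult_pow_mat:
  fixes c :: "'a :: comm_ring_1"
  assumes "A \<in> carrier_mat k k"
  shows "(c \<cdot>\<^sub>m A) ^\<^sub>m m = c ^ m \<cdot>\<^sub>m A ^\<^sub>m m"
proof (induction m)
  case (Suc m)
  then show ?case
    using assms by (auto intro!: eq_matI simp: mult_smult_assoc_mat mult_smult_distrib)
qed (use assms in auto)

lemma eigenvalue_smult_mat:
  fixes A :: "'a :: field mat"
  assumes A: "A \<in> carrier_mat n n" and c: "c \<noteq> 0" and ev: "eigenvalue (c \<cdot>\<^sub>m A) \<mu>"
  shows "eigenvalue A (\<mu> / c)"
proof -
  from ev obtain v where v: "v \<in> carrier_vec n" "v \<noteq> 0\<^sub>v n" "(c \<cdot>\<^sub>m A) *\<^sub>v v = \<mu> \<cdot>\<^sub>v v"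
    using A by (auto simp: eigenvalue_def eigenvector_def)
  have "A *\<^sub>v v = (\<mu> / c) \<cdot>\<^sub>v v"
  proof (rule eq_vecI)
    fix i assume "i < dim_vec ((\<mu> / c) \<cdot>\<^sub>v v)"
    then have i: "i < n"
      using v by simp
    have "c * (row A i \<bullet> v) = ((c \<cdot>\<^sub>m A) *\<^sub>v v) $ i"
      using A v(1) i by simp
    also have "\<dots> = \<mu> * v $ i"
      unfolding v(3) using v(1) i by simp
    finally have "c * (row A i \<bullet> v) = \<mu> * v $ i" .
    then show "(A *\<^sub>v v) $ i = ((\<mu> / c) \<cdot>\<^sub>v v) $ i"
      using A v i c by (simp add: field_simps)
  qed (use A v in simp)
  then show ?thesis
    using A v by (auto simp: eigenvalue_def eigenvector_def)
qed

lemma spectral_radius_smult_mat_le: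
  assumes A: "A \<in> carrier_mat n n" and n: "0 < n" and c: "c \<noteq> 0"
  shows "spectral_radius (c \<cdot>\<^sub>m A) \<le> norm c * spectral_radius A"
proof -
  obtain \<mu> where "eigenvalue (c \<cdot>\<^sub>m A) \<mu>" and radius: "spectral_radius (c \<cdot>\<^sub>m A) = norm \<mu>"
    using spectral_radius_mem_max(1)[of "c \<cdot>\<^sub>m A" n] A n by (auto simp: spectrum_def)
  then have "norm (\<mu> / c) \<le> spectral_radius A"
    using eigenvalue_smult_mat[OF A c] spectral_radius_mem_max(2)[OF A n] by (auto simp: spectrum_def)
  then show ?thesis
    using c radius by (simp add: norm_divide divide_le_eq mult.commute)
qed

lemma spectral_radius_pow_mat_entry_bound:
  fixes A :: "complex mat" and r :: real
  assumes A: "A \<in> carrier_mat k k" and r: "0 < r" and radius: "spectral_radius A \<le> r"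
  shows "\<exists>C>0. \<forall>m i j. i < k \<longrightarrow> j < k \<longrightarrow>
           norm ((A ^\<^sub>m m) $$ (i, j)) \<le> C * r ^ m * real (Suc m) ^ (k - 1)"
proof (cases "k = 0")
  case False
  let ?B = "complex_of_real (1 / r) \<cdot>\<^sub>m A"
  have "spectral_radius ?B \<le> spectral_radius A / r"
    using spectral_radius_smult_mat_le[OF A _, of "complex_of_real (1 / r)"] False r
    by (simp add: norm_divide)
  also have "\<dots> \<le> 1"
    using r radius by simp
  finally have "spectral_radius ?B \<le> 1" .
  then obtain c1 c2 where bound: "\<And>m. norm_bound (?B ^\<^sub>m m) (c1 + c2 * of_nat m ^ (k - 1))"
    using spectral_radius_jnf_norm_bound_le_1_upper_triangular[of ?B k] A by auto
  define C where "C = \<bar>c1\<bar> + \<bar>c2\<bar> + 1"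
  have "norm ((A ^\<^sub>m m) $$ (i, j)) \<le> C * r ^ m * real (Suc m) ^ (k - 1)" if "i < k" "j < k" for m i j
  proof -
    have "(1 / r) ^ m * norm ((A ^\<^sub>m m) $$ (i, j)) = norm ((?B ^\<^sub>m m) $$ (i, j))"
      using that A r by (simp add: smult_pow_mat norm_mult norm_power norm_divide)
    also have "\<dots> \<le> c1 + c2 * real m ^ (k - 1)"
      using bound[of m] that A by (simp add: norm_bound_def)
    also have "\<dots> \<le> C * real (Suc m) ^ (k - 1)"
    proof -
      let ?s = "real (Suc m) ^ (k - 1)"
      have "1 \<le> ?s" and "real m ^ (k - 1) \<le> ?s"
        by (simp_all add: power_mono)
      have "c1 \<le> \<bar>c1\<bar> * ?s"
        using \<open>1 \<le> ?s\<close> by (metis abs_ge_self abs_ge_zero mult_left_mono mult.right_neutral order_trans)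
      moreover have "c2 * real m ^ (k - 1) \<le> \<bar>c2\<bar> * real m ^ (k - 1)"
        by (intro mult_right_mono) simp_all
      moreover have "\<bar>c2\<bar> * real m ^ (k - 1) \<le> \<bar>c2\<bar> * ?s"
        using \<open>real m ^ (k - 1) \<le> ?s\<close> by (intro mult_left_mono) simp_all
      ultimately show ?thesis
        using \<open>1 \<le> ?s\<close> unfolding C_def distrib_right by linarith
    qed
    finally show ?thesis
      using r by (simp add: power_one_over pos_divide_le_eq mult.commute mult.left_commute)
  qed
  moreover have "0 < C"
    unfolding C_def by simp
  ultimately show ?thesis
    by blast
qed (intro exI[of _ 1], simp)

lemma card_walks_bound:
  fixes r :: real
  assumes e: "bij_betw e {..<k} V" and r: "0 < r"
    and radius: "spectral_radius (map_mat of_nat (adjacency_mat k e R)) \<le> r"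
  shows "\<exists>C>0. \<forall>n>0. real (card (walks R V n)) \<le> C * r ^ n * real n ^ (k - 1)"
proof -
  let ?B = "adjacency_mat k e R"
  let ?A = "map_mat (of_nat :: nat \<Rightarrow> complex) ?B"
  have B: "?B \<in> carrier_mat k k"
    by (simp add: adjacency_mat_def)
  have hom: "semiring_hom (of_nat :: nat \<Rightarrow> complex)"
    by unfold_locales auto
  obtain C where C: "0 < C" and growth: "\<And>m i j. i < k \<Longrightarrow> j < k \<Longrightarrow>
      norm ((?A ^\<^sub>m m) $$ (i, j)) \<le> C * r ^ m * real (Suc m) ^ (k - 1)"
    using spectral_radius_pow_mat_entry_bound[of ?A k r] B r radius by auto
  have entry: "real ((?B ^\<^sub>m m) $$ (i, j)) = norm ((?A ^\<^sub>m m) $$ (i, j))" if "i < k" "j < k" for m i j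
    using semiring_hom.mat_hom_pow[OF hom B, of m, symmetric] that B by simp
  have "real (card (walks R V n)) \<le> (real k * real k * C + 1) / r * r ^ n * real n ^ (k - 1)"
    if "0 < n" for n
  proof -
    obtain m where n: "n = Suc m"
      using \<open>0 < n\<close> not0_implies_Suc by blast
    have "real (card (walks R V n)) \<le> (\<Sum>i<k. \<Sum>j<k. real ((?B ^\<^sub>m m) $$ (i, j)))"
      using card_walks_le_sum_adjacency_pow[OF e, of R m] unfolding n of_nat_sum[symmetric] of_nat_le_iff .
    also have "\<dots> \<le> (\<Sum>i<k. \<Sum>j<k. C * r ^ m * real n ^ (k - 1))"
      using entry growth by (intro sum_mono) (simp add: n)
    also have "\<dots> = real k * real k * C * r ^ m * real n ^ (k - 1)"
      by simp
    also have "\<dots> \<le> (real k * real k * C + 1) * r ^ m * real n ^ (k - 1)"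
      \<comment> \<open>the \<open>+ 1\<close> keeps the constant positive when \<open>k = 0\<close>\<close>
      using r by (intro mult_right_mono) simp_all
    also have "\<dots> = (real k * real k * C + 1) / r * r ^ n * real n ^ (k - 1)"
      using r by (simp add: n)
    finally show ?thesis .
  qed
  moreover have "0 < (real k * real k * C + 1) / r"
    using C r by (intro divide_pos_pos add_nonneg_pos) simp_all
  ultimately show ?thesis
    by blast
qed

section \<open>Invariance entropy and growth rates\<close>

lemma elog2_le_log:
  assumes "x \<le> enat c" and "real c \<le> B"
  shows "elog2 x \<le> ereal (log 2 B)"
proof (cases x)
  case (enat p)
  show ?thesis
  proof (cases "p = 0")
    case False
    have "real p \<le> B"
      using assms enat by simp
    then have "log 2 (real p) \<le> log 2 B"
      using False by (subst log_le_cancel_iff) auto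
    then show ?thesis
      using False enat by (simp add: elog2_def)
  qed (simp add: elog2_def enat)
qed (use assms in simp)

lemma h_inv_le_log_growth_rate:
  fixes C r :: real
  assumes C: "0 < C" and r: "0 < r"
    and r_inv: "\<And>n. 0 < n \<Longrightarrow> r_inv F n Q \<le> enat (N n)"
    and N: "\<And>n. 0 < n \<Longrightarrow> real (N n) \<le> C * r ^ n * real n ^ d"
  shows "h_inv F Q \<le> ereal (log 2 r)"
proof -
  define g where "g n = log 2 C / real n + real d * (log 2 (real n) / real n) + log 2 r" for n :: nat
  have "eventually (\<lambda>n. ereal (1 / real n) * elog2 (r_inv F n Q) \<le> ereal (g n)) sequentially"
    using eventually_gt_at_top[of 0]
  proof eventually_elim
    case (elim n)
    have "elog2 (r_inv F n Q) \<le> ereal (log 2 (C * r ^ n * real n ^ d))"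
      using elog2_le_log[OF r_inv[OF elim] N[OF elim]] .
    then have "ereal (1 / real n) * elog2 (r_inv F n Q)
        \<le> ereal (1 / real n) * ereal (log 2 (C * r ^ n * real n ^ d))"
      by (rule ereal_mult_left_mono) simp
    also have "\<dots> = ereal (g n)"
      using C r elim by (simp add: g_def log_mult log_nat_power add_divide_distrib)
    finally show ?case .
  qed
  then have "h_inv F Q \<le> limsup (\<lambda>n. ereal (g n))"
    unfolding h_inv_def by (rule Limsup_mono)
  also have "\<dots> = ereal (log 2 r)"
  proof (rule lim_imp_Limsup)
    have "g \<longlonglongrightarrow> log 2 r"
      unfolding g_def log_def by real_asymp
    then show "(\<lambda>n. ereal (g n)) \<longlonglongrightarrow> ereal (log 2 r)"
      by (simp add: tendsto_ereal)
  qed simp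
  finally show ?thesis .
qed

lemma r_inv_le_card: "spanning F Q n SS \<Longrightarrow> finite SS \<Longrightarrow> r_inv F n Q \<le> enat (card SS)"
  unfolding r_inv_def by (intro Inf_lower) auto

section \<open>Walks in the admissible graph are spanning\<close>

definition adm_edge :: "('x \<Rightarrow> 'u \<Rightarrow> 'x set) \<Rightarrow> 'x set \<Rightarrow> 'u \<Rightarrow> 'u \<Rightarrow> bool" where
  "adm_edge F Q a b \<longleftrightarrow> (\<exists>x\<in>Qu F Q a. F x a \<inter> Qu F Q b \<noteq> {})"

lemma adm_matrix_eq_adjacency_mat:
  assumes "finite V"
  obtains e where "bij_betw e {..<card V} V"
    and "adm_matrix F Q V = map_mat of_nat (adjacency_mat (card V) e (adm_edge F Q))"
proof
  let ?e = "SOME e. bij_betw e {..<card V} V"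
  show "bij_betw ?e {..<card V} V"
    using someI_ex[OF ex_bij_betw_nat_finite[OF assms]] by (simp add: lessThan_atLeast0)
  show "adm_matrix F Q V = map_mat of_nat (adjacency_mat (card V) ?e (adm_edge F Q))"
    by (auto simp: adm_matrix_def Let_def adjacency_mat_def adm_entry_def adm_edge_def)
qed

lemma Iset_cong_take: "take (Suc i) w = take (Suc i) w' \<Longrightarrow> Iset F Q w x i = Iset F Q w' x i"
proof (induction i)
  case 0
  show ?case
    by simp
next
  case (Suc i)
  have "take (Suc i) w = take (Suc i) w'"
    using Suc.prems by (metis take_take min.absorb1 le_SucI order_refl)
  moreover have "w ! i = w' ! i" and "w ! Suc i = w' ! Suc i"
    using Suc.prems by (metis nth_take lessI less_SucI)+
  ultimately show ?case
    using Suc.IH by simp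
qed

lemma Iset_subset_Qu: "x \<in> Qu F Q (w ! 0) \<Longrightarrow> Iset F Q w x i \<subseteq> Qu F Q (w ! i)"
  by (induction i) auto

lemma Fimg_Iset_subset:
  assumes "x \<in> Qu F Q (w ! 0)"
  shows "Fimg F (Iset F Q w x i) (w ! i) \<subseteq> Q"
proof
  fix y assume "y \<in> Fimg F (Iset F Q w x i) (w ! i)"
  then obtain z where "z \<in> Iset F Q w x i" and "y \<in> F z (w ! i)"
    by (auto simp: Fimg_def)
  then show "y \<in> Q"
    using Iset_subset_Qu[OF assms] by (auto simp: Qu_def)
qed

lemma Iset_nonempty_le: "Iset F Q w x j \<noteq> {} \<Longrightarrow> i \<le> j \<Longrightarrow> Iset F Q w x i \<noteq> {}"
proof (induction j)
  case (Suc j)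
  show ?case
  proof (cases "i = Suc j")
    case False
    have "Iset F Q w x j \<noteq> {}"
      using Suc.prems(1) by (auto simp: Fimg_def)
    then show ?thesis
      using Suc.IH Suc.prems(2) False by simp
  qed (use Suc.prems in simp)
qed simp

lemma adm_edge_if_Iset_nonempty:
  assumes "x \<in> Qu F Q (w ! 0)" and "Iset F Q w x (Suc i) \<noteq> {}"
  shows "adm_edge F Q (w ! i) (w ! Suc i)"
proof -
  obtain y z where "y \<in> Iset F Q w x i" "z \<in> F y (w ! i)" "z \<in> Qu F Q (w ! Suc i)"
    using assms(2) by (auto simp: Fimg_def)
  then show ?thesis
    using Iset_subset_Qu[OF assms(1)] unfolding adm_edge_def by blast
qed

lemma mem_Iset_snoc:
  assumes "length w = Suc j" and "y \<in> Fimg F (Iset F Q w x j) (w ! j)" and "y \<in> Qu F Q b"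
  shows "y \<in> Iset F Q (w @ [b]) x (Suc j)"
proof -
  have "Iset F Q (w @ [b]) x j = Iset F Q w x j"
    using assms(1) by (intro Iset_cong_take) simp
  then show ?thesis
    using assms by (simp add: nth_append)
qed

lemma Iset_extend:
  assumes sys: "is_system F" and cov: "is_cover F Q V"
  shows "length w = Suc j \<Longrightarrow> set w \<subseteq> V \<Longrightarrow> x \<in> Qu F Q (w ! 0) \<Longrightarrow> Iset F Q w x j \<noteq> {} \<Longrightarrow>
    \<exists>w'. length w' = Suc j + k \<and> take (Suc j) w' = w \<and> set w' \<subseteq> V \<and> Iset F Q w' x (j + k) \<noteq> {}"
proof (induction k arbitrary: w j)
  case 0
  then show ?case
    by (intro exI[of _ w]) simp
next
  case (Suc k)
  obtain z where z: "z \<in> Iset F Q w x j"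
    using Suc.prems(4) by auto
  obtain y where y: "y \<in> F z (w ! j)"
    using sys unfolding is_system_def by blast
  then have y_img: "y \<in> Fimg F (Iset F Q w x j) (w ! j)"
    using z by (auto simp: Fimg_def)
  then obtain b where b: "b \<in> V" "y \<in> Qu F Q b"
    using Fimg_Iset_subset[OF Suc.prems(3)] cov unfolding is_cover_def by blast
  have "y \<in> Iset F Q (w @ [b]) x (Suc j)"
    by (rule mem_Iset_snoc[OF Suc.prems(1) y_img b(2)])
  then have "Iset F Q (w @ [b]) x (Suc j) \<noteq> {}"
    by blast
  moreover have "length (w @ [b]) = Suc (Suc j)" and "set (w @ [b]) \<subseteq> V"
    and "x \<in> Qu F Q ((w @ [b]) ! 0)"
    using Suc.prems(1-3) b(1) by (simp_all add: nth_append)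
  ultimately obtain w' where w': "length w' = Suc (Suc j) + k" "take (Suc (Suc j)) w' = w @ [b]"
    "set w' \<subseteq> V" "Iset F Q w' x (Suc j + k) \<noteq> {}"
    using Suc.IH by blast
  have "take (Suc j) w' = take (Suc j) (take (Suc (Suc j)) w')"
    by simp
  also have "\<dots> = w"
    using w'(2) Suc.prems(1) by simp
  finally have "take (Suc j) w' = w" .
  then show ?case
    using w' by (intro exI[of _ w']) simp
qed

definition viable_words :: "('x \<Rightarrow> 'u \<Rightarrow> 'x set) \<Rightarrow> 'x set \<Rightarrow> 'u set \<Rightarrow> nat \<Rightarrow> 'x \<Rightarrow> 'u \<Rightarrow> 'u list set" where
  "viable_words F Q V n x a = {w. length w = n \<and> set w \<subseteq> V \<and> w ! 0 = a \<and> Iset F Q w x (n - 1) \<noteq> {}}"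

lemma viable_words_subset_walks:
  assumes "x \<in> Qu F Q a"
  shows "viable_words F Q V n x a \<subseteq> walks (adm_edge F Q) V n"
proof
  fix w assume w: "w \<in> viable_words F Q V n x a"
  have "adm_edge F Q (w ! i) (w ! Suc i)" if "Suc i < n" for i
    using adm_edge_if_Iset_nonempty[of x F Q w i] Iset_nonempty_le[of F Q w x "n - 1" "Suc i"] w that assms
    by (auto simp: viable_words_def)
  then show "w \<in> walks (adm_edge F Q) V n"
    using w by (auto simp: viable_words_def walks_def)
qed

lemma viable_words_extend:
  assumes sys: "is_system F" and cov: "is_cover F Q V" and x: "x \<in> Qu F Q a"
    and p: "length p = Suc j" "Suc j \<le> n" "set p \<subseteq> V" "p ! 0 = a" "Iset F Q p x j \<noteq> {}"
  shows "\<exists>w\<in>viable_words F Q V n x a. take (Suc j) w = p"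
proof -
  obtain w where w: "length w = Suc j + (n - Suc j)" "take (Suc j) w = p" "set w \<subseteq> V"
      "Iset F Q w x (j + (n - Suc j)) \<noteq> {}"
    using Iset_extend[OF sys cov p(1) p(3) _ p(5), of "n - Suc j"] x p(4) by auto
  have "w ! 0 = a"
    using w(2) p(4) by (metis nth_take zero_less_Suc)
  moreover have "j + (n - Suc j) = n - 1"
    using p(2) by simp
  ultimately show ?thesis
    using w p(2) unfolding viable_words_def by auto
qed

lemma viable_words_branching:
  assumes sys: "is_system F" and cov: "is_cover F Q V" and x: "x \<in> Qu F Q a"
    and w: "w \<in> viable_words F Q V n x a" and i: "i < n - 1"
  shows "Fimg F (Iset F Q w x i) (w ! i)
    \<subseteq> (\<Union>w'\<in>{w' \<in> viable_words F Q V n x a. take (Suc i) w' = take (Suc i) w}. Qu F Q (w' ! Suc i))"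
proof
  fix y assume y: "y \<in> Fimg F (Iset F Q w x i) (w ! i)"
  have len: "length w = n" and V: "set w \<subseteq> V" and w0: "w ! 0 = a"
    using w by (auto simp: viable_words_def)
  have "y \<in> Q"
    using Fimg_Iset_subset[of x F Q w i] x w0 y by auto
  then obtain b where b: "b \<in> V" "y \<in> Qu F Q b"
    using cov by (auto simp: is_cover_def)
  let ?p = "take (Suc i) w @ [b]"
  have "Iset F Q (take (Suc i) w) x i = Iset F Q w x i"
    by (rule Iset_cong_take) simp
  moreover have "take (Suc i) w ! i = w ! i"
    by simp
  ultimately have p_Iset: "y \<in> Iset F Q ?p x (Suc i)"
    using mem_Iset_snoc[of "take (Suc i) w" i y F Q x b] y b len i by simp
  have p_len: "length ?p = Suc (Suc i)"
    using len i by simp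
  have p_set: "set ?p \<subseteq> V"
    using V b(1) by (auto dest: in_set_takeD)
  have p_0: "?p ! 0 = a"
    using w0 len i by (simp add: nth_append)
  have "Suc (Suc i) \<le> n"
    using i by simp
  then obtain w' where w': "w' \<in> viable_words F Q V n x a" "take (Suc (Suc i)) w' = ?p"
    using viable_words_extend[OF sys cov x p_len _ p_set p_0] p_Iset by blast
  have "take (Suc i) w' = take (Suc i) (take (Suc (Suc i)) w')"
    by simp
  also have "\<dots> = take (Suc i) w"
    using w'(2) len i by simp
  finally have "take (Suc i) w' = take (Suc i) w" .
  moreover have "w' ! Suc i = b"
  proof -
    have "w' ! Suc i = take (Suc (Suc i)) w' ! Suc i"
      by simp
    then show ?thesis
      using w'(2) len i by (simp add: nth_append)
  qed
  ultimately show "y \<in> (\<Union>w'\<in>{w' \<in> viable_words F Q V n x a. take (Suc i) w' = take (Suc i) w}. Qu F Q (w' ! Suc i))"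
    using w'(1) b(2) by (intro UN_I[of w']) simp_all
qed

lemma admissible_family_viable_words:
  assumes sys: "is_system F" and cov: "is_cover F Q V" and a: "a \<in> V" and x: "x \<in> Qu F Q a"
    and n: "0 < n"
  shows "admissible_family F Q n (viable_words F Q V n x a)" and "x \<in> QS F Q n (viable_words F Q V n x a)"
proof -
  let ?S = "viable_words F Q V n x a"
  have "adm_point F Q n ?S x"
    unfolding adm_point_def
  proof (intro conjI ballI allI impI)
    show "x \<in> Q"
      using x by (simp add: Qu_def)
    fix w assume w: "w \<in> ?S"
    then have w0: "x \<in> Qu F Q (w ! 0)" and last: "Iset F Q w x (n - 1) \<noteq> {}"
      using x by (auto simp: viable_words_def)
    show "Fimg F (Iset F Q w x (n - 1)) (w ! (n - 1)) \<subseteq> Q"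
      by (rule Fimg_Iset_subset[OF w0])
    fix i assume i: "i < n - 1"
    show "Iset F Q w x (Suc i) \<noteq> {}"
      by (rule Iset_nonempty_le[OF last]) (use i in simp)
    show "Fimg F (Iset F Q w x i) (w ! i)
        \<subseteq> (\<Union>w'\<in>{w' \<in> ?S. take (Suc i) w' = take (Suc i) w}. Qu F Q (w' ! Suc i))"
      by (rule viable_words_branching[OF sys cov x w i])
  qed
  moreover have "?S \<noteq> {}"
  proof -
    have "\<exists>w\<in>?S. take (Suc 0) w = [a]"
      by (rule viable_words_extend[OF sys cov x]) (use a n in auto)
    then show ?thesis
      by blast
  qed
  ultimately show "admissible_family F Q n ?S" and "x \<in> QS F Q n ?S"
    using n by (auto simp: admissible_family_def QS_def viable_words_def)
qed

lemma spanning_walks: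
  assumes sys: "is_system F" and cov: "is_cover F Q V" and n: "0 < n"
  shows "spanning F Q n (walks (adm_edge F Q) V n)"
  unfolding spanning_def
proof (intro conjI subsetI)
  show "\<forall>w\<in>walks (adm_edge F Q) V n. length w = n"
    by (simp add: walks_def)
  fix x assume "x \<in> Q"
  then obtain a where a: "a \<in> V" "x \<in> Qu F Q a"
    using cov by (auto simp: is_cover_def)
  then show "x \<in> (\<Union>S\<in>{S. S \<subseteq> walks (adm_edge F Q) V n \<and> admissible_family F Q n S}. QS F Q n S)"
    using admissible_family_viable_words[OF sys cov a n] viable_words_subset_walks[OF a(2)] by blast
qed

lemma h_inv_le_log_of_spectral_radius_le:
  assumes sys: "is_system F" and cov: "is_cover F Q V" and V: "finite V"
    and r: "0 < r" and radius: "spectral_radius (adm_matrix F Q V) \<le> r"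
  shows "h_inv F Q \<le> ereal (log 2 r)"
proof -
  obtain e where e: "bij_betw e {..<card V} V"
    and M: "adm_matrix F Q V = map_mat of_nat (adjacency_mat (card V) e (adm_edge F Q))"
    using adm_matrix_eq_adjacency_mat[OF V] .
  obtain C where C: "0 < C" and card_walks: "\<And>n. 0 < n \<Longrightarrow>
      real (card (walks (adm_edge F Q) V n)) \<le> C * r ^ n * real n ^ (card V - 1)"
    using card_walks_bound[OF e r] radius M by auto
  show ?thesis
  proof (rule h_inv_le_log_growth_rate[OF C r, where N = "\<lambda>n. card (walks (adm_edge F Q) V n)"])
    fix n :: nat assume "0 < n"
    then show "r_inv F n Q \<le> enat (card (walks (adm_edge F Q) V n))"
      using r_inv_le_card spanning_walks[OF sys cov] finite_walks[OF V] by blast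
  qed (rule card_walks)
qed

theorem proposition3p8:
  fixes F :: "'x \<Rightarrow> 'u \<Rightarrow> 'x set" and Q :: "'x set" and V :: "'u set"
  assumes "is_system F"
    and "controlled_invariant F Q"
    and "finite V"
    and "is_cover F Q V"
  shows "h_inv F Q \<le> rlog2 (spectral_radius (adm_matrix F Q V))"
proof (cases "0 < spectral_radius (adm_matrix F Q V)")
  case True
  then show ?thesis
    using h_inv_le_log_of_spectral_radius_le[OF assms(1,4,3) True order_refl]
    by (simp add: rlog2_def)
next
  case False
  have "h_inv F Q \<le> ereal t" for t
  proof -
    have "spectral_radius (adm_matrix F Q V) \<le> 2 powr t"
      using False powr_gt_zero[of 2 t] by linarith
    then show ?thesis
      using h_inv_le_log_of_spectral_radius_le[OF assms(1,4,3), of "2 powr t"] by simp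
  qed
  then have "h_inv F Q = -\<infinity>"
    by (rule ereal_bot)
  then show ?thesis
    by simp
qed

end
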